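(* Let $X\in\mathcal C$. Then: (1) $\bot\in X$ (the single-leaf bunch); (2) for all bunches $\Delta,\Delta'$, if $\Delta\in X$ then $(\Delta\mathbin{;}\Delta')\in X$; (3) for every bunch $\Delta$, if $(\Delta\mathbin{;}\Delta)\in X$ then $\Delta\in X$; (4) for every bunch $\Delta$, $\Delta\in X$ if and only if $\lfloor\Delta\rfloor\in X$.
   Context: Formulas of BI: $\varphi,\psi ::= \top \mid \bot \mid \varphi\wedge\psi \mid \varphi\vee\psi \mid \varphi\to\psi \mid \mathsf{emp} \mid \varphi\ast\psi \mid \varphi -\!\!\ast\, \psi \mid a$, $a\in\mathrm{Atom}$. Bunches are finite binary trees whose leaves are formulas or empty bunches $\varnothing_m,\varnothing_a$ and whose internal nodes are labelled by the multiplicative comma ($\Delta_1\mathbin{,}\Delta_2$) or the additive semicolon ($\Delta_1\mathbin{;}\Delta_2$). A bunched context $\Delta(-)$ is a bunch with one leaf replaced by a hole; $\Delta(\Gamma)$ fills it with $\Gamma$. Bunch equivalence $\equiv$ is the least equivalence relation making $\mathbin{,}$ commutative, associative with unit $\varnothing_m$, $\mathbin{;}$ commutative, associative with unit $\varnothing_a$, and closed under contexts; $\mathrm{Bunch}$ is the set of bunches modulo $\equiv$. $\lfloor\Delta\rfloor$ is the formula obtained from $\Delta$ by replacing $\mathbin{,}$ by $\ast$, $\varnothing_m$ by $\mathsf{emp}$, $\mathbin{;}$ by $\wedge$, $\varnothing_a$ by $\top$. The cut-free BI sequent calculus ($\Delta\vdash_{\mathsf{cf}}\varphi$) has the rules: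 (ax) $a\vdash a$ for atoms $a$; (equiv) from $\Delta'\vdash\varphi$, $\Delta\equiv\Delta'$ infer $\Delta\vdash\varphi$; (W;) from $\Delta(\Delta_1)\vdash\varphi$ infer $\Delta(\Delta_1\mathbin{;}\Delta_2)\vdash\varphi$; (C;) from $\Delta(\Delta_1\mathbin{;}\Delta_1)\vdash\varphi$ infer $\Delta(\Delta_1)\vdash\varphi$; (empR) $\varnothing_m\vdash\mathsf{emp}$; (empL) from $\Delta(\varnothing_m)\vdash\varphi$ infer $\Delta(\mathsf{emp})\vdash\varphi$; ($\ast$R) from $\Delta_1\vdash\varphi$, $\Delta_2\vdash\psi$ infer $\Delta_1\mathbin{,}\Delta_2\vdash\varphi\ast\psi$; ($\ast$L) from $\Delta(\varphi\mathbin{,}\psi)\vdash\chi$ infer $\Delta(\varphi\ast\psi)\vdash\chi$; ($-\!\ast$R) from $\Delta\mathbin{,}\varphi\vdash\psi$ infer $\Delta\vdash\varphi-\!\!\ast\,\psi$; ($-\!\ast$L) from $\Delta_1\vdash\varphi$, $\Delta(\Delta_2\mathbin{,}\psi)\vdash\chi$ infer $\Delta((\Delta_1\mathbin{,}\Delta_2)\mathbin{,}(\varphi-\!\!\ast\,\psi))\vdash\chi$; ($\top$R) $\varnothing_a\vdash\top$; ($\top$L) from $\Delta(\varnothing_a)\vdash\varphi$ infer $\Delta(\top)\vdash\varphi$; ($\wedge$R) from $\Delta_1\vdash\varphi$, $\Delta_2\vdash\psi$ infer $\Delta_1\mathbin{;}\Delta_2\vdash\varphi\wedge\psi$; ($\wedge$L)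 from $\Delta(\varphi\mathbin{;}\psi)\vdash\chi$ infer $\Delta(\varphi\wedge\psi)\vdash\chi$; ($\to$R) from $\Delta\mathbin{;}\varphi\vdash\psi$ infer $\Delta\vdash\varphi\to\psi$; ($\to$L) from $\Delta_1\vdash\varphi$, $\Delta(\Delta_2\mathbin{;}\psi)\vdash\chi$ infer $\Delta((\Delta_1\mathbin{;}\Delta_2)\mathbin{;}(\varphi\to\psi))\vdash\chi$; ($\bot$L) $\Delta(\bot)\vdash\varphi$; ($\vee$R1/2) from $\Delta\vdash\varphi$ (resp. $\Delta\vdash\psi$) infer $\Delta\vdash\varphi\vee\psi$; ($\vee$L) from $\Delta(\varphi)\vdash\chi$, $\Delta(\psi)\vdash\chi$ infer $\Delta(\varphi\vee\psi)\vdash\chi$. (No cut rule.) For a formula $\varphi$, the principal closed set is $[\![\varphi]\!]^{\mathrm{out}}=\{\Delta\in\mathrm{Bunch}\mid\Delta\vdash_{\mathsf{cf}}\varphi\}$. For $X\subseteq\mathrm{Bunch}$, $\mathrm{cl}(X)=\bigcap\{[\![\varphi]\!]^{\mathrm{out}}\mid X\subseteq[\![\varphi]\!]^{\mathrm{out}}\}$, and $\mathcal C=\{X\subseteq\mathrm{Bunch}\mid X=\mathrm{cl}(X)\}$. A formula regarded as an element of $\mathrm{Bunch}$ is the single-leaf bunch. *)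

theory Defs
  imports Main
begin

datatype 'a fm = FTop | FBot | FAnd "'a fm" "'a fm" | FOr "'a fm" "'a fm" | FImp "'a fm" "'a fm"
  | FEmp | FStar "'a fm" "'a fm" | FWand "'a fm" "'a fm" | FAtom 'a

datatype 'a bunch = BFm "'a fm" | EmpM | EmpA | Comma "'a bunch" "'a bunch" | Semi "'a bunch" "'a bunch"

datatype 'a bctx = Hole | CommaL "'a bctx" "'a bunch" | CommaR "'a bunch" "'a bctx"
  | SemiL "'a bctx" "'a bunch" | SemiR "'a bunch" "'a bctx"

fun fill :: "'a bctx \<Rightarrow> 'a bunch \<Rightarrow> 'a bunch" where
  "fill Hole G = G"
| "fill (CommaL C D) G = Comma (fill C G) D"
| "fill (CommaR D C) G = Comma D (fill C G)"
| "fill (SemiL C D) G = Semi (fill C G) D"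
| "fill (SemiR D C) G = Semi D (fill C G)"

inductive beq :: "'a bunch \<Rightarrow> 'a bunch \<Rightarrow> bool" where
  refl: "beq D D"
| sym: "beq D D' \<Longrightarrow> beq D' D"
| trans: "beq D D' \<Longrightarrow> beq D' D'' \<Longrightarrow> beq D D''"
| comma_comm: "beq (Comma D1 D2) (Comma D2 D1)"
| comma_assoc: "beq (Comma D1 (Comma D2 D3)) (Comma (Comma D1 D2) D3)"
| comma_unit: "beq (Comma D EmpM) D"
| semi_comm: "beq (Semi D1 D2) (Semi D2 D1)"
| semi_assoc: "beq (Semi D1 (Semi D2 D3)) (Semi (Semi D1 D2) D3)"
| semi_unit: "beq (Semi D EmpA) D"
| ctx: "beq D D' \<Longrightarrow> beq (fill C D) (fill C D')"

fun floor_b :: "'a bunch \<Rightarrow> 'a fm" where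
  "floor_b (BFm f) = f"
| "floor_b EmpM = FEmp"
| "floor_b EmpA = FTop"
| "floor_b (Comma D1 D2) = FStar (floor_b D1) (floor_b D2)"
| "floor_b (Semi D1 D2) = FAnd (floor_b D1) (floor_b D2)"

text \<open>Cut-free BI sequent calculus.\<close>
inductive cf :: "'a bunch \<Rightarrow> 'a fm \<Rightarrow> bool" where
  ax: "cf (BFm (FAtom a)) (FAtom a)"
| equiv: "cf D' f \<Longrightarrow> beq D D' \<Longrightarrow> cf D f"
| weakS: "cf (fill C D1) f \<Longrightarrow> cf (fill C (Semi D1 D2)) f"
| contrS: "cf (fill C (Semi D1 D1)) f \<Longrightarrow> cf (fill C D1) f"
| empR: "cf EmpM FEmp"
| empL: "cf (fill C EmpM) f \<Longrightarrow> cf (fill C (BFm FEmp)) f"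
| starR: "cf D1 f \<Longrightarrow> cf D2 g \<Longrightarrow> cf (Comma D1 D2) (FStar f g)"
| starL: "cf (fill C (Comma (BFm f) (BFm g))) h \<Longrightarrow> cf (fill C (BFm (FStar f g))) h"
| wandR: "cf (Comma D (BFm f)) g \<Longrightarrow> cf D (FWand f g)"
| wandL: "cf D1 f \<Longrightarrow> cf (fill C (Comma D2 (BFm g))) h \<Longrightarrow>
          cf (fill C (Comma (Comma D1 D2) (BFm (FWand f g)))) h"
| topR: "cf EmpA FTop"
| topL: "cf (fill C EmpA) f \<Longrightarrow> cf (fill C (BFm FTop)) f"
| andR: "cf D1 f \<Longrightarrow> cf D2 g \<Longrightarrow> cf (Semi D1 D2) (FAnd f g)"
| andL: "cf (fill C (Semi (BFm f) (BFm g))) h \<Longrightarrow> cf (fill C (BFm (FAnd f g))) h"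
| impR: "cf (Semi D (BFm f)) g \<Longrightarrow> cf D (FImp f g)"
| impL: "cf D1 f \<Longrightarrow> cf (fill C (Semi D2 (BFm g))) h \<Longrightarrow>
          cf (fill C (Semi (Semi D1 D2) (BFm (FImp f g)))) h"
| botL: "cf (fill C (BFm FBot)) f"
| orR1: "cf D f \<Longrightarrow> cf D (FOr f g)"
| orR2: "cf D g \<Longrightarrow> cf D (FOr f g)"
| orL: "cf (fill C (BFm f)) h \<Longrightarrow> cf (fill C (BFm g)) h \<Longrightarrow> cf (fill C (BFm (FOr f g))) h"

definition principal :: "'a fm \<Rightarrow> 'a bunch set" where
  "principal f = {D. cf D f}"

definition cl :: "'a bunch set \<Rightarrow> 'a bunch set" where
  "cl X = \<Inter> {principal f | f. X \<subseteq> principal f}"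

definition closed_sets :: "'a bunch set set" where
  "closed_sets = {X. X = cl X}"

end

theory Submission
  imports Defs
begin

(* A closed set is an intersection of principal sets, so D belongs to X iff D \<turnstile> f for every
   formula f with X \<subseteq> [[f]]^out. Every left rule with a single premise, applied in the empty
   context, therefore preserves membership in X: \<bottom>L gives (1), weakening (2), contraction (3).
   For (4), the left rules \<ast>L, \<and>L, empL and \<top>L turn D \<turnstile> f into \<lfloor>D\<rfloor> \<turnstile> f. Conversely, these rules
   are invertible: a cut-free derivation of E \<turnstile> f yields one of D \<turnstile> f whenever D arises from E by
   unfolding occurrences of \<ast>, \<and>, emp and \<top> into bunch structure, by induction on the
   derivation; bunch equivalence commutes with unfolding. *)

fun bctx_comp :: "'a bctx \<Rightarrow> 'a bctx \<Rightarrow> 'a bctx" where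
  "bctx_comp Hole C' = C'"
| "bctx_comp (CommaL C D) C' = CommaL (bctx_comp C C') D"
| "bctx_comp (CommaR D C) C' = CommaR D (bctx_comp C C')"
| "bctx_comp (SemiL C D) C' = SemiL (bctx_comp C C') D"
| "bctx_comp (SemiR D C) C' = SemiR D (bctx_comp C C')"

lemma fill_bctx_comp [simp]: "fill (bctx_comp C C') G = fill C (fill C' G)"
  by (induction C) auto

lemma cf_fill_floor_b: "cf (fill C D) f \<Longrightarrow> cf (fill C (BFm (floor_b D))) f"
proof (induction D arbitrary: C)
  case (BFm g)
  then show ?case by simp
next
  case EmpM
  then show ?case using cf.empL by fastforce
next
  case EmpA
  then show ?case using cf.topL by fastforce
next
  case (Comma D1 D2)
  have "cf (fill (bctx_comp C (CommaL Hole D2)) D1) f" using Comma.prems by simp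
  then have "cf (fill (bctx_comp C (CommaR (BFm (floor_b D1)) Hole)) D2) f"
    using Comma.IH(1) by fastforce
  then have "cf (fill C (Comma (BFm (floor_b D1)) (BFm (floor_b D2)))) f"
    using Comma.IH(2) by fastforce
  then show ?case using cf.starL by fastforce
next
  case (Semi D1 D2)
  have "cf (fill (bctx_comp C (SemiL Hole D2)) D1) f" using Semi.prems by simp
  then have "cf (fill (bctx_comp C (SemiR (BFm (floor_b D1)) Hole)) D2) f"
    using Semi.IH(1) by fastforce
  then have "cf (fill C (Semi (BFm (floor_b D1)) (BFm (floor_b D2)))) f"
    using Semi.IH(2) by fastforce
  then show ?case using cf.andL by fastforce
qed

inductive unfolds :: "'a bunch \<Rightarrow> 'a bunch \<Rightarrow> bool" where
  BFm: "unfolds (BFm f) (BFm f)"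
| EmpM: "unfolds EmpM EmpM"
| EmpA: "unfolds EmpA EmpA"
| FStar: "unfolds (BFm f) A \<Longrightarrow> unfolds (BFm g) B \<Longrightarrow> unfolds (BFm (FStar f g)) (Comma A B)"
| FAnd: "unfolds (BFm f) A \<Longrightarrow> unfolds (BFm g) B \<Longrightarrow> unfolds (BFm (FAnd f g)) (Semi A B)"
| FEmp: "unfolds (BFm FEmp) EmpM"
| FTop: "unfolds (BFm FTop) EmpA"
| Comma: "unfolds E1 D1 \<Longrightarrow> unfolds E2 D2 \<Longrightarrow> unfolds (Comma E1 E2) (Comma D1 D2)"
| Semi: "unfolds E1 D1 \<Longrightarrow> unfolds E2 D2 \<Longrightarrow> unfolds (Semi E1 E2) (Semi D1 D2)"

inductive_simps unfolds_simps [simp]: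
  "unfolds EmpM D" "unfolds EmpA D" "unfolds (Comma E1 E2) D" "unfolds (Semi E1 E2) D"
  "unfolds (BFm FBot) D" "unfolds (BFm (FAtom a)) D" "unfolds (BFm (FOr f g)) D"
  "unfolds (BFm (FImp f g)) D" "unfolds (BFm (FWand f g)) D"
  "unfolds (BFm (FStar f g)) D" "unfolds (BFm (FAnd f g)) D"
  "unfolds (BFm FEmp) D" "unfolds (BFm FTop) D"

lemma unfolds_refl [simp]: "unfolds D D"
  by (induction D) (auto intro: unfolds.intros)

lemma unfolds_floor_b: "unfolds (BFm (floor_b D)) D"
  by (induction D) (auto intro: unfolds.intros)

inductive unfolds_ctx :: "'a bctx \<Rightarrow> 'a bctx \<Rightarrow> bool" where
  Hole: "unfolds_ctx Hole Hole"
| CommaL: "unfolds_ctx C C' \<Longrightarrow> unfolds E D \<Longrightarrow> unfolds_ctx (CommaL C E) (CommaL C' D)"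
| CommaR: "unfolds E D \<Longrightarrow> unfolds_ctx C C' \<Longrightarrow> unfolds_ctx (CommaR E C) (CommaR D C')"
| SemiL: "unfolds_ctx C C' \<Longrightarrow> unfolds E D \<Longrightarrow> unfolds_ctx (SemiL C E) (SemiL C' D)"
| SemiR: "unfolds E D \<Longrightarrow> unfolds_ctx C C' \<Longrightarrow> unfolds_ctx (SemiR E C) (SemiR D C')"

lemma unfolds_fill: "unfolds_ctx C C' \<Longrightarrow> unfolds E D \<Longrightarrow> unfolds (fill C E) (fill C' D)"
  by (induction rule: unfolds_ctx.induct) auto

lemma unfolds_fillE:
  assumes "unfolds (fill C E) D"
  obtains C' D' where "D = fill C' D'" "unfolds_ctx C C'" "unfolds E D'"
proof -
  have "\<exists>C' D'. D = fill C' D' \<and> unfolds_ctx C C' \<and> unfolds E D'"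
    using assms
  proof (induction C arbitrary: D)
    case Hole
    then show ?case by (auto intro!: exI[of _ Hole] unfolds_ctx.Hole)
  next
    case (CommaL C B)
    then show ?case by simp (metis fill.simps(2) unfolds_ctx.CommaL)
  next
    case (CommaR B C)
    then show ?case by simp (metis fill.simps(3) unfolds_ctx.CommaR)
  next
    case (SemiL C B)
    then show ?case by simp (metis fill.simps(4) unfolds_ctx.SemiL)
  next
    case (SemiR B C)
    then show ?case by simp (metis fill.simps(5) unfolds_ctx.SemiR)
  qed
  then show thesis using that by blast
qed

(* Both directions are needed in the case of the symmetry rule. *)
lemma beq_unfolds:
  "beq E E' \<Longrightarrow> (\<forall>D. unfolds E D \<longrightarrow> (\<exists>D'. unfolds E' D' \<and> beq D D'))
    \<and> (\<forall>D'. unfolds E' D' \<longrightarrow> (\<exists>D. unfolds E D \<and> beq D D'))"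
proof (induction rule: beq.induct)
  case (sym D D')
  then show ?case by (meson beq.sym)
next
  case (trans D D' D'')
  then show ?case by (meson beq.trans)
next
  case (ctx E E' C)
  show ?case
  proof (intro conjI allI impI)
    fix D
    assume "unfolds (fill C E) D"
    then obtain C' D0 where "D = fill C' D0" "unfolds_ctx C C'" "unfolds E D0"
      by (rule unfolds_fillE)
    with ctx.IH show "\<exists>D'. unfolds (fill C E') D' \<and> beq D D'"
      by (meson beq.ctx unfolds_fill)
  next
    fix D'
    assume "unfolds (fill C E') D'"
    then obtain C' D0 where "D' = fill C' D0" "unfolds_ctx C C'" "unfolds E' D0"
      by (rule unfolds_fillE)
    with ctx.IH show "\<exists>D. unfolds (fill C E) D \<and> beq D D'"
      by (meson beq.ctx unfolds_fill)
  qed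
qed (fastforce intro: beq.intros)+

lemma cf_unfolds: "cf E f \<Longrightarrow> unfolds E D \<Longrightarrow> cf D f"
proof (induction arbitrary: D rule: cf.induct)
  case (equiv E' f E)
  then show ?case using beq_unfolds cf.equiv by blast
next
  case (weakS C D1 f D2)
  from weakS.prems obtain C' D1' D2' where
    "D = fill C' (Semi D1' D2')" "unfolds_ctx C C'" "unfolds D1 D1'"
    by (auto elim!: unfolds_fillE)
  then show ?case using weakS.IH by (metis cf.weakS unfolds_fill)
next
  case (contrS C D1 f)
  from contrS.prems obtain C' D1' where "D = fill C' D1'" "unfolds_ctx C C'" "unfolds D1 D1'"
    by (rule unfolds_fillE)
  then show ?case using contrS.IH by (metis cf.contrS unfolds_fill unfolds.Semi)
next
  case (empL C f)
  from empL.prems obtain C' D' where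
    "D = fill C' D'" "unfolds_ctx C C'" "D' = BFm FEmp \<or> D' = EmpM"
    by (auto elim!: unfolds_fillE)
  then show ?case using empL.IH by (metis cf.empL unfolds_fill unfolds.EmpM)
next
  case (starL C f g h)
  from starL.prems obtain C' D' where
    D: "D = fill C' D'" and "unfolds_ctx C C'" "unfolds (BFm (FStar f g)) D'"
    by (rule unfolds_fillE)
  then have "D' = BFm (FStar f g) \<or> unfolds (Comma (BFm f) (BFm g)) D'" by auto
  then show ?case using starL.IH D \<open>unfolds_ctx C C'\<close>
    by (metis cf.starL unfolds_fill unfolds_refl)
next
  case (wandL D1 f C D2 g h)
  from wandL.prems obtain C' D1' D2' where
    "D = fill C' (Comma (Comma D1' D2') (BFm (FWand f g)))" "unfolds_ctx C C'"
    "unfolds D1 D1'" "unfolds D2 D2'"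
    by (auto elim!: unfolds_fillE)
  then show ?case using wandL.IH by (metis cf.wandL unfolds_fill unfolds.Comma unfolds.BFm)
next
  case (topL C f)
  from topL.prems obtain C' D' where
    "D = fill C' D'" "unfolds_ctx C C'" "D' = BFm FTop \<or> D' = EmpA"
    by (auto elim!: unfolds_fillE)
  then show ?case using topL.IH by (metis cf.topL unfolds_fill unfolds.EmpA)
next
  case (andL C f g h)
  from andL.prems obtain C' D' where
    D: "D = fill C' D'" and "unfolds_ctx C C'" "unfolds (BFm (FAnd f g)) D'"
    by (rule unfolds_fillE)
  then have "D' = BFm (FAnd f g) \<or> unfolds (Semi (BFm f) (BFm g)) D'" by auto
  then show ?case using andL.IH D \<open>unfolds_ctx C C'\<close>
    by (metis cf.andL unfolds_fill unfolds_refl)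
next
  case (impL D1 f C D2 g h)
  from impL.prems obtain C' D1' D2' where
    "D = fill C' (Semi (Semi D1' D2') (BFm (FImp f g)))" "unfolds_ctx C C'"
    "unfolds D1 D1'" "unfolds D2 D2'"
    by (auto elim!: unfolds_fillE)
  then show ?case using impL.IH by (metis cf.impL unfolds_fill unfolds.Semi unfolds.BFm)
next
  case (botL C f)
  from botL.prems show ?case by (auto elim!: unfolds_fillE intro: cf.botL)
next
  case (orL C f h g)
  from orL.prems obtain C' where "D = fill C' (BFm (FOr f g))" "unfolds_ctx C C'"
    by (auto elim!: unfolds_fillE)
  then show ?case using orL.IH by (metis cf.orL unfolds_fill unfolds.BFm)
qed (auto intro: cf.intros)

lemma cf_floor_b_iff: "cf (BFm (floor_b D)) f \<longleftrightarrow> cf D f"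
  using cf_fill_floor_b[of Hole] cf_unfolds unfolds_floor_b by fastforce

lemma mem_closed_sets_iff:
  "X \<in> closed_sets \<Longrightarrow> D \<in> X \<longleftrightarrow> (\<forall>f. X \<subseteq> principal f \<longrightarrow> cf D f)"
  unfolding closed_sets_def cl_def principal_def by blast

theorem proposition6p2:
  fixes X :: "'a bunch set"
  assumes "X \<in> closed_sets"
  shows "BFm FBot \<in> X
    \<and> (\<forall>D D'. D \<in> X \<longrightarrow> Semi D D' \<in> X)
    \<and> (\<forall>D. Semi D D \<in> X \<longrightarrow> D \<in> X)
    \<and> (\<forall>D. D \<in> X \<longleftrightarrow> BFm (floor_b D) \<in> X)"
  unfolding mem_closed_sets_iff[OF assms]
  using cf.botL[of Hole] cf.weakS[of Hole] cf.contrS[of Hole]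
  by (simp add: cf_floor_b_iff) blast

end
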